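(* Let $A$ be an associative (not necessarily unital) algebra over a field which satisfies the identity $x_1x_2\cdots x_n=x_nx_{n-1}\cdots x_1$. Then $A$ satisfies the identity $x_1\cdots x_{n+1}=x_{\tau(1)}\cdots x_{\tau(n+1)}$ for every even permutation $\tau\in S_{n+1}$.
   Context: An identity is satisfied by $A$ if it holds upon substituting arbitrary elements of $A$ for the variables. *)

theory Defs
  imports Complex_Main "HOL-Combinatorics.Permutations"
begin

text \<open>Product of a nonempty list in a (not necessarily unital) semigroup:
  lprod [x1,...,xn] = x1 * (x2 * ( ... * xn)). The empty product is left unspecified.\<close>
fun lprod :: "'a::semigroup_mult list \<Rightarrow> 'a" where
  "lprod [x] = x"
| "lprod (x # y # ys) = x * lprod (y # ys)"

text \<open>An associative (non-unital) algebra over a field 'k: the ring structure of 'a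
  (class ring, no unit required) plus a scalar multiplication making 'a a 'k-vector space
  such that multiplication is bilinear.\<close>
definition algebra_over :: "('k::field \<Rightarrow> 'a::ring \<Rightarrow> 'a) \<Rightarrow> bool" where
  "algebra_over smult \<longleftrightarrow> Vector_Spaces.vector_space smult \<and>
     (\<forall>c x y. smult c (x * y) = smult c x * y \<and> smult c (x * y) = x * smult c y)"

end

theory Submission
  imports Defs
begin

text \<open>Merging the adjacent letters x_j, x_(j+1) of a word of length n+1 into one letter gives a
  word of length n; reversing it with the identity of degree n and splitting the letter again shows
  that the permutation "reverse, then swap j and j+1" gives an identity of degree n+1. Composing two
  of these, the reversals cancel, so every product of two adjacent transpositions gives an identity,
  and such products generate the alternating group.\<close>

lemma lprod_Cons: "ys \<noteq> [] \<Longrightarrow> lprod (a # ys) = a * lprod ys"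
  by (cases ys) auto

lemma lprod_append_mult: "lprod (xs @ (a * b) # ys) = lprod (xs @ a # b # ys)"
proof (induction xs)
  case Nil
  then show ?case by (cases ys) (auto simp: mult.assoc)
next
  case (Cons c xs)
  then show ?case by (simp add: lprod_Cons)
qed

lemma lprod_rev_eq:
  fixes zs :: "'a::semigroup_mult list"
  assumes "\<forall>x :: nat \<Rightarrow> 'a. lprod (map x [0..<n]) = lprod (map x (rev [0..<n]))"
    and "length zs = n"
  shows "lprod (rev zs) = lprod zs"
proof -
  have "lprod (map ((!) zs) [0..<length zs]) = lprod (map ((!) zs) (rev [0..<length zs]))"
    using assms by simp
  then show ?thesis by (simp only: map_nth rev_map[symmetric])
qed

definition perm_identities :: "'a::semigroup_mult itself \<Rightarrow> nat \<Rightarrow> (nat \<Rightarrow> nat) set" where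
  "perm_identities _ m =
     {\<sigma>. \<forall>x :: nat \<Rightarrow> 'a. lprod (map x [0..<m]) = lprod (map (x \<circ> \<sigma>) [0..<m])}"

lemma id_in_perm_identities: "id \<in> perm_identities T m"
  by (simp add: perm_identities_def)

lemma perm_identities_comp:
  assumes "\<sigma> \<in> perm_identities TYPE('a::semigroup_mult) m" and "\<rho> \<in> perm_identities TYPE('a) m"
  shows "\<sigma> \<circ> \<rho> \<in> perm_identities TYPE('a) m"
proof (unfold perm_identities_def, safe)
  fix x :: "nat \<Rightarrow> 'a"
  have "lprod (map x [0..<m]) = lprod (map (x \<circ> \<sigma>) [0..<m])"
    using assms(1) by (simp add: perm_identities_def)
  also have "\<dots> = lprod (map ((x \<circ> \<sigma>) \<circ> \<rho>) [0..<m])"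
    using assms(2) by (simp only: perm_identities_def mem_Collect_eq)
  finally show "lprod (map x [0..<m]) = lprod (map (x \<circ> (\<sigma> \<circ> \<rho>)) [0..<m])"
    by (simp only: comp_assoc)
qed

lemma perm_identities_left_inverse:
  "\<sigma> \<in> perm_identities T m \<Longrightarrow> \<rho> \<circ> \<sigma> = id \<Longrightarrow> \<rho> \<in> perm_identities T m"
proof (unfold perm_identities_def, safe)
  fix x :: "nat \<Rightarrow> 'a"
  assume "\<forall>x :: nat \<Rightarrow> 'a. lprod (map x [0..<m]) = lprod (map (x \<circ> \<sigma>) [0..<m])"
    and "\<rho> \<circ> \<sigma> = id"
  then show "lprod (map x [0..<m]) = lprod (map (x \<circ> \<rho>) [0..<m])"
    by (metis comp_assoc comp_id)
qed

definition reflect :: "nat \<Rightarrow> nat \<Rightarrow> nat" where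
  "reflect n k = (if k \<le> n then n - k else k)"

lemma reflect_reflect [simp]: "reflect n (reflect n k) = k"
  by (simp add: reflect_def)

lemma map_comp_reflect: "map (f \<circ> reflect n) [0..<Suc n] = rev (map f [0..<Suc n])"
  by (rule nth_equalityI) (auto simp: reflect_def rev_nth simp del: upt_Suc)

lemma upt_split_pair: "j < n \<Longrightarrow> [0..<Suc n] = [0..<j] @ j # Suc j # [j+2..<Suc n]"
proof -
  assume "j < n"
  then have "[0..<Suc n] = [0..<j] @ [j..<Suc n]"
    using upt_add_eq_append[of 0 j "Suc n - j"] by (simp del: upt_Suc)
  also have "[j..<Suc n] = j # Suc j # [j+2..<Suc n]"
    using \<open>j < n\<close> by (simp add: upt_conv_Cons del: upt_Suc)
  finally show ?thesis .
qed

abbreviation swap_next :: "nat \<Rightarrow> nat \<Rightarrow> nat" where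
  "swap_next j \<equiv> Transposition.transpose j (Suc j)"

lemma map_comp_swap_next:
  assumes "j < n"
  shows "map (f \<circ> swap_next j) [0..<Suc n] = map f [0..<j] @ f (Suc j) # f j # map f [j+2..<Suc n]"
  using assms by (subst upt_split_pair) (auto simp: Transposition.transpose_def simp del: upt_Suc)

context
  fixes n :: nat
  assumes lprod_rev: "\<And>zs :: 'a::semigroup_mult list. length zs = n \<Longrightarrow> lprod (rev zs) = lprod zs"
begin

lemma lprod_rev_around_pair:
  fixes a b :: 'a
  assumes "length xs + length ys + 1 = n"
  shows "lprod (rev ys @ a # b # rev xs) = lprod (xs @ a # b # ys)"
proof -
  have "lprod (rev ys @ a # b # rev xs) = lprod (rev (xs @ (a * b) # ys))"
    by (simp add: lprod_append_mult)
  also have "\<dots> = lprod (xs @ (a * b) # ys)"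
    using assms by (intro lprod_rev) simp
  finally show ?thesis by (simp add: lprod_append_mult)
qed

lemma swap_next_reflect_in_perm_identities:
  assumes j: "j < n"
  shows "swap_next j \<circ> reflect n \<in> perm_identities TYPE('a) (Suc n)"
proof (unfold perm_identities_def, safe)
  fix x :: "nat \<Rightarrow> 'a"
  have "map (x \<circ> (swap_next j \<circ> reflect n)) [0..<Suc n] = rev (map (x \<circ> swap_next j) [0..<Suc n])"
    by (simp only: map_comp_reflect flip: comp_assoc)
  also have "\<dots> = rev (map x [j+2..<Suc n]) @ x j # x (Suc j) # rev (map x [0..<j])"
    using j by (simp add: map_comp_swap_next del: upt_Suc)
  finally have "lprod (map (x \<circ> (swap_next j \<circ> reflect n)) [0..<Suc n]) =
      lprod (map x [0..<j] @ x j # x (Suc j) # map x [j+2..<Suc n])"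
    using j by (simp add: lprod_rev_around_pair del: upt_Suc)
  also have "\<dots> = lprod (map x [0..<Suc n])"
    using j by (simp add: upt_split_pair del: upt_Suc)
  finally show "lprod (map x [0..<Suc n]) = lprod (map (x \<circ> (swap_next j \<circ> reflect n)) [0..<Suc n])"
    by simp
qed

lemma swap_next_comp_in_perm_identities:
  assumes "j < n" "k < n"
  shows "swap_next j \<circ> swap_next k \<in> perm_identities TYPE('a) (Suc n)"
proof -
  have "reflect n \<circ> swap_next k \<in> perm_identities TYPE('a) (Suc n)"
    by (rule perm_identities_left_inverse[OF swap_next_reflect_in_perm_identities[OF \<open>k < n\<close>]])
      (simp add: fun_eq_iff)
  with swap_next_reflect_in_perm_identities[OF \<open>j < n\<close>]
  have "(swap_next j \<circ> reflect n) \<circ> (reflect n \<circ> swap_next k) \<in> perm_identities TYPE('a) (Suc n)"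
    by (rule perm_identities_comp)
  moreover have "(swap_next j \<circ> reflect n) \<circ> (reflect n \<circ> swap_next k) = swap_next j \<circ> swap_next k"
    by (simp add: fun_eq_iff)
  ultimately show ?thesis by simp
qed

lemma swap_next_comp_transpose_in_perm_identities:
  assumes "a < b" "b \<le> n" "i < n"
  shows "swap_next i \<circ> Transposition.transpose a b \<in> perm_identities TYPE('a) (Suc n)"
  using assms
proof (induction b arbitrary: i)
  case 0
  then show ?case by simp
next
  case (Suc b)
  show ?case
  proof (cases "a = b")
    case True
    have "b < n" using Suc.prems by simp
    show ?thesis
      unfolding True by (rule swap_next_comp_in_perm_identities[OF \<open>i < n\<close> \<open>b < n\<close>])
  next
    case False
    then have "a < b" using Suc.prems by simp
    have "b < n" using Suc.prems by simp
    have "Transposition.transpose a b \<circ> swap_next b \<in> perm_identities TYPE('a) (Suc n)"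
      by (rule perm_identities_left_inverse[OF Suc.IH[OF \<open>a < b\<close> _ \<open>b < n\<close>]])
        (use Suc.prems in \<open>auto simp: fun_eq_iff\<close>)
    with swap_next_comp_in_perm_identities[OF \<open>i < n\<close> \<open>b < n\<close>]
    have "(swap_next i \<circ> swap_next b) \<circ> (Transposition.transpose a b \<circ> swap_next b)
        \<in> perm_identities TYPE('a) (Suc n)"
      by (rule perm_identities_comp)
    moreover have "Transposition.transpose a (Suc b) = swap_next b \<circ> Transposition.transpose a b \<circ> swap_next b"
      using \<open>a < b\<close> by (simp add: fun_eq_iff Transposition.transpose_def)
    ultimately show ?thesis by (simp only: comp_assoc)
  qed
qed

lemma transpose_comp_transpose_in_perm_identities:
  assumes "a \<le> n" "b \<le> n" "a \<noteq> b" "c \<le> n" "d \<le> n" "c \<noteq> d"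
  shows "Transposition.transpose a b \<circ> Transposition.transpose c d \<in> perm_identities TYPE('a) (Suc n)"
proof -
  have swap0: "swap_next 0 \<circ> Transposition.transpose a b \<in> perm_identities TYPE('a) (Suc n)"
    if "a \<le> n" "b \<le> n" "a \<noteq> b" for a b
  proof (cases "a < b")
    case True
    with that show ?thesis by (intro swap_next_comp_transpose_in_perm_identities) auto
  next
    case False
    with that show ?thesis
      by (subst transpose_commute) (intro swap_next_comp_transpose_in_perm_identities, auto)
  qed
  have "Transposition.transpose a b \<circ> swap_next 0 \<in> perm_identities TYPE('a) (Suc n)"
    by (rule perm_identities_left_inverse[OF swap0[OF assms(1-3)]]) (simp add: fun_eq_iff)
  from perm_identities_comp[OF this swap0[OF assms(4-6)]]
  have "(Transposition.transpose a b \<circ> swap_next 0) \<circ> (swap_next 0 \<circ> Transposition.transpose c d)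
      \<in> perm_identities TYPE('a) (Suc n)" .
  moreover have "(Transposition.transpose a b \<circ> swap_next 0) \<circ> (swap_next 0 \<circ> Transposition.transpose c d)
      = Transposition.transpose a b \<circ> Transposition.transpose c d"
    by (simp add: fun_eq_iff)
  ultimately show ?thesis by simp
qed

end

lemma evenperm_in_comp_closed:
  assumes "p permutes S" "finite S" "evenperm p"
    and "id \<in> P" and comp_closed: "\<And>\<sigma> \<rho>. \<sigma> \<in> P \<Longrightarrow> \<rho> \<in> P \<Longrightarrow> \<sigma> \<circ> \<rho> \<in> P"
    and transpose_pairs: "\<And>a b c d. a \<in> S \<Longrightarrow> b \<in> S \<Longrightarrow> a \<noteq> b \<Longrightarrow> c \<in> S \<Longrightarrow> d \<in> S \<Longrightarrow> c \<noteq> d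
      \<Longrightarrow> Transposition.transpose a b \<circ> Transposition.transpose c d \<in> P"
  shows "p \<in> P"
proof -
  have "(evenperm p \<longrightarrow> p \<in> P) \<and>
      (\<not> evenperm p \<longrightarrow> (\<forall>a\<in>S. \<forall>b\<in>S. a \<noteq> b \<longrightarrow> Transposition.transpose a b \<circ> p \<in> P))"
    using assms(1,2)
  proof (induction rule: permutes_induct)
    case id
    show ?case using \<open>id \<in> P\<close> evenperm_id by blast
  next
    case (swap a b p)
    have "permutation p" using swap.hyps(4) \<open>finite S\<close> permutes_imp_permutation by blast
    then have parity: "evenperm (Transposition.transpose a b \<circ> p) \<longleftrightarrow> \<not> evenperm p"
      using swap.hyps(3) by (simp add: evenperm_comp permutation_swap_id evenperm_swap)
    show ?case
    proof (cases "evenperm p")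
      case True
      then have "p \<in> P" using swap.IH by blast
      have "Transposition.transpose c d \<circ> (Transposition.transpose a b \<circ> p) \<in> P"
        if "c \<in> S" "d \<in> S" "c \<noteq> d" for c d
        using comp_closed[OF transpose_pairs[OF that swap.hyps(1-3)] \<open>p \<in> P\<close>]
        by (simp only: comp_assoc)
      with True parity show ?thesis by blast
    next
      case False
      then have "Transposition.transpose a b \<circ> p \<in> P" using swap.IH swap.hyps(1-3) by blast
      with False parity show ?thesis by blast
    qed
  qed
  with \<open>evenperm p\<close> show ?thesis by simp
qed

theorem lemma3p2:
  fixes smult :: "'k::field \<Rightarrow> 'a::ring \<Rightarrow> 'a" and n :: nat
  assumes "algebra_over smult"
    and "\<forall>x :: nat \<Rightarrow> 'a. lprod (map x [0..<n]) = lprod (map x (rev [0..<n]))"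
    and "\<tau> permutes {0..<n+1}" and "evenperm \<tau>"
  shows "\<forall>x :: nat \<Rightarrow> 'a. lprod (map x [0..<n+1]) = lprod (map (x \<circ> \<tau>) [0..<n+1])"
proof -
  have "\<tau> \<in> perm_identities TYPE('a) (Suc n)"
    by (rule evenperm_in_comp_closed[OF assms(3) _ assms(4)])
      (auto intro: id_in_perm_identities perm_identities_comp
        transpose_comp_transpose_in_perm_identities[OF lprod_rev_eq[OF assms(2)]])
  then show ?thesis by (simp add: perm_identities_def)
qed

end
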